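(* Let $\varphi$ be a DBI normal formula, let $k\ge1$ and $i_1,\dots,i_k\in\mathcal{A}$ with $i_j\neq i_{j+1}$ for all $j$, and let $\alpha_1,\dots,\alpha_k$ be the unique events of $\mathcal{U}_\varphi$ with $0\,Q^\varphi_{i_1}\alpha_1Q^\varphi_{i_2}\alpha_2\cdots Q^\varphi_{i_k}\alpha_k$. Then for every pointed Kripke model $(\mathcal{M},v)$: $\mathcal{M},v\vDash\widehat{B}_{i_1}\Bigl(\mathsf{pre}^\varphi(\alpha_1)\wedge\widehat{B}_{i_2}\bigl(\mathsf{pre}^\varphi(\alpha_2)\wedge\dots\widehat{B}_{i_k}\mathsf{pre}^\varphi(\alpha_k)\bigr)\Bigr)$ if and only if $\mathcal{M}\odot\mathcal{U}_\varphi,(v,0)\nvDash B_{i_1}\dots B_{i_k}\bot$.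
   Context: Agents $\mathcal{A}=\{1,\dots,n\}$, $n>1$; language $\mathcal{L}$: $\varphi ::= p \mid \neg\varphi \mid (\varphi\wedge\varphi)\mid B_i\varphi$, with $\top,\bot$ as usual and $\widehat{B}_i\varphi:=\neg B_i\neg\varphi$. Kripke model $\mathcal{M}=\langle S,R,V\rangle$ (nonempty $S$, $R_i\subseteq S\times S$, $V:\mathit{Prop}\to 2^S$), standard truth. Action model $\mathcal{U}=\langle E,Q,\mathsf{pre}\rangle$ (nonempty $E$, $Q_i\subseteq E\times E$, $\mathsf{pre}:E\to\mathcal{L}$). Pointed update of $(\mathcal{M},w)$ with $(\mathcal{U},\alpha)$, defined iff $\mathcal{M},w\vDash\mathsf{pre}(\alpha)$: with $T=\{(x,\beta)\in S\times E\mid\mathcal{M},x\vDash\mathsf{pre}(\beta)\}$, $\mathcal{M}\odot\mathcal{U}=\langle S^{\mathcal U},R^{\mathcal U},V^{\mathcal U}\rangle$ where $S^{\mathcal U}$ is the smallest subset of $T$ containing $(w,\alpha)$ closed under: $(x,\beta)\in S^{\mathcal U}$, $(u,\gamma)\in T$, $xR_iu$, $\beta Q_i\gamma$ imply $(u,\gamma)\in S^{\mathcal U}$; $R^{\mathcal U}_i$ relates $(x,\beta),(u,\gamma)\in S^{\mathcal U}$ iff $xR_iu$ and $\beta Q_i\gamma$; $V^{\mathcal U}(p)=\{(x,\beta)\in S^{\mathcal U}\mid x\in V(p)\}$. Target agents: $\mathsf{ta}(p)=\varnothing$, $\mathsf{ta}(\neg\phi)=\mathsf{ta}(\phi)$,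 $\mathsf{ta}(\phi\wedge\psi)=\mathsf{ta}(\phi)\cup\mathsf{ta}(\psi)$, $\mathsf{ta}(B_i\phi)=\{i\}$. DBI formulas: $\varphi ::= B_i\xi \mid B_i(\xi\wedge\varphi)\mid(\varphi\wedge\varphi)\mid B_i\varphi$, $\xi$ purely propositional. DBI normal: $B_i\xi$ always; $B_i\varphi$, $B_i(\xi\wedge\varphi)$ iff $\varphi$ DBI normal and $i\notin\mathsf{ta}(\varphi)$; $\varphi\wedge\psi$ iff both DBI normal and $\mathsf{ta}(\varphi)\cap\mathsf{ta}(\psi)=\varnothing$. Action model $\mathcal{U}_\varphi=\langle E^\varphi,Q^\varphi,\mathsf{pre}^\varphi\rangle$ for DBI normal $\varphi$, recursively; always $E^\varphi=\{0,-1\}\sqcup D^\varphi$, $\varnothing\ne D^\varphi\subseteq\{1,2,\dots\}$, $\mathsf{pre}^\varphi(0)=\mathsf{pre}^\varphi(-1)=\top$; $\underline{Q}_j:=Q_j\cap((E\setminus\{0\})\times(E\setminus\{0\}))$. (1) $\varphi=B_i\xi$: $D=\{m\}$, $\mathsf{pre}(m)=\xi$, $Q_j=\{(0,-1),(m,-1),(-1,-1)\}$ ($j\ne i$), $Q_i=\{(0,m),(m,m),(-1,-1)\}$. (2) $\varphi=B_i\psi$: fresh $m\ge1$, $m\notin D^\psi$; $D^\varphi=D^\psi\sqcup\{m\}$; $\mathsf{pre}^\varphi$ extends $\mathsf{pre}^\psi$ with $\mathsf{pre}^\varphi(m)=\top$; $Q^\varphi_j=\underline{Q}^\psi_j\cup\{(0,-1)\}\cup\{(m,k)\mid(0,k)\in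 Q^\psi_j\}$ ($j\ne i$); $Q^\varphi_i=\underline{Q}^\psi_i\cup\{(0,m),(m,m)\}$. (3) $\varphi=B_i(\xi\wedge\psi)$: as (2) but $\mathsf{pre}^\varphi(m)=\xi$. (4) $\varphi=\psi\wedge\theta$: with $D^\psi\cap D^\theta=\varnothing$, $D^\varphi=D^\psi\sqcup D^\theta$, $\mathsf{pre}^\varphi=\mathsf{pre}^\psi\cup\mathsf{pre}^\theta$, $Q^\varphi_j=\underline{Q}^\psi_j\cup\underline{Q}^\theta_j\cup\{(0,k)\mid(0,k)\in Q^\psi_j\cup Q^\theta_j, k\in D^\psi\sqcup D^\theta\}\cup\{(0,-1)\mid\text{no such }k\text{ exists}\}$. In $\mathcal{U}_\varphi$ every event has exactly one $Q^\varphi_j$-successor for each agent $j$. *)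

theory Defs
  imports Main
begin

datatype 'p form = Prop 'p | Neg "'p form" | Conj "'p form" "'p form" | B nat "'p form"

definition Bot :: "'p form" where
  "Bot = Conj (Prop undefined) (Neg (Prop undefined))"

definition Top :: "'p form" where
  "Top = Neg Bot"

definition Dia :: "nat \<Rightarrow> 'p form \<Rightarrow> 'p form" where
  "Dia i f = Neg (B i (Neg f))"

fun agents :: "'p form \<Rightarrow> nat set" where
  "agents (Prop p) = {}"
| "agents (Neg f) = agents f"
| "agents (Conj f g) = agents f \<union> agents g"
| "agents (B i f) = insert i (agents f)"

fun propositional :: "'p form \<Rightarrow> bool" where
  "propositional (Prop p) = True"
| "propositional (Neg f) = propositional f"
| "propositional (Conj f g) = (propositional f \<and> propositional g)"
| "propositional (B i f) = False"

record ('s, 'p) kripke =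
  St :: "'s set"
  Rel :: "nat \<Rightarrow> ('s \<times> 's) set"
  Val :: "'p \<Rightarrow> 's set"

definition wf_kripke :: "nat \<Rightarrow> ('s, 'p) kripke \<Rightarrow> bool" where
  "wf_kripke n M \<longleftrightarrow> St M \<noteq> {} \<and> (\<forall>i\<in>{1..n}. Rel M i \<subseteq> St M \<times> St M)
     \<and> (\<forall>p. Val M p \<subseteq> St M)"

fun sat :: "('s, 'p) kripke \<Rightarrow> 's \<Rightarrow> 'p form \<Rightarrow> bool" where
  "sat M w (Prop p) = (w \<in> Val M p)"
| "sat M w (Neg f) = (\<not> sat M w f)"
| "sat M w (Conj f g) = (sat M w f \<and> sat M w g)"
| "sat M w (B i f) = (\<forall>u. (w, u) \<in> Rel M i \<longrightarrow> sat M u f)"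

record 'p amodel =
  Ev :: "int set"
  Acc :: "nat \<Rightarrow> (int \<times> int) set"
  Pre :: "int \<Rightarrow> 'p form"

definition T_set :: "('s, 'p) kripke \<Rightarrow> 'p amodel \<Rightarrow> ('s \<times> int) set" where
  "T_set M U = {(x, \<beta>). x \<in> St M \<and> \<beta> \<in> Ev U \<and> sat M x (Pre U \<beta>)}"

inductive_set upd_states :: "('s, 'p) kripke \<Rightarrow> 'p amodel \<Rightarrow> 's \<Rightarrow> int \<Rightarrow> ('s \<times> int) set"
  for M U w \<alpha> where
  base: "(w, \<alpha>) \<in> T_set M U \<Longrightarrow> (w, \<alpha>) \<in> upd_states M U w \<alpha>"
| step: "(x, \<beta>) \<in> upd_states M U w \<alpha> \<Longrightarrow> (u, \<gamma>) \<in> T_set M U \<Longrightarrow> (x, u) \<in> Rel M i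
         \<Longrightarrow> (\<beta>, \<gamma>) \<in> Acc U i \<Longrightarrow> (u, \<gamma>) \<in> upd_states M U w \<alpha>"

definition update :: "('s, 'p) kripke \<Rightarrow> 'p amodel \<Rightarrow> 's \<Rightarrow> int \<Rightarrow> ('s \<times> int, 'p) kripke" where
  "update M U w \<alpha> =
    \<lparr> St = upd_states M U w \<alpha>,
      Rel = (\<lambda>i. {((x, \<beta>), (u, \<gamma>)). (x, \<beta>) \<in> upd_states M U w \<alpha> \<and> (u, \<gamma>) \<in> upd_states M U w \<alpha>
                     \<and> (x, u) \<in> Rel M i \<and> (\<beta>, \<gamma>) \<in> Acc U i}),
      Val = (\<lambda>p. {(x, \<beta>). (x, \<beta>) \<in> upd_states M U w \<alpha> \<and> x \<in> Val M p}) \<rparr>"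

fun ta :: "'p form \<Rightarrow> nat set" where
  "ta (Prop p) = {}"
| "ta (Neg f) = ta f"
| "ta (Conj f g) = ta f \<union> ta g"
| "ta (B i f) = {i}"

inductive dbi_normal :: "'p form \<Rightarrow> bool" where
  box_prop: "propositional \<xi> \<Longrightarrow> dbi_normal (B i \<xi>)"
| box: "dbi_normal \<phi> \<Longrightarrow> i \<notin> ta \<phi> \<Longrightarrow> dbi_normal (B i \<phi>)"
| box_conj: "propositional \<xi> \<Longrightarrow> dbi_normal \<phi> \<Longrightarrow> i \<notin> ta \<phi> \<Longrightarrow> dbi_normal (B i (Conj \<xi> \<phi>))"
| conj: "dbi_normal \<phi> \<Longrightarrow> dbi_normal \<psi> \<Longrightarrow> ta \<phi> \<inter> ta \<psi> = {} \<Longrightarrow> dbi_normal (Conj \<phi> \<psi>)"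

definition underQ :: "(int \<times> int) set \<Rightarrow> (int \<times> int) set" where
  "underQ R = R \<inter> ((UNIV - {0}) \<times> (UNIV - {0}))"

text \<open>U_phi phi D U: U is an admissible construction of the action model for \<phi>
  (all choices of fresh event names allowed), with positive event set D
  and event set Ev U = {0,-1} \<union> D.\<close>

inductive U_phi :: "'p form \<Rightarrow> int set \<Rightarrow> 'p amodel \<Rightarrow> bool" where
  c1: "propositional \<xi> \<Longrightarrow> m \<ge> 1 \<Longrightarrow>
       U_phi (B i \<xi>) {m}
         \<lparr> Ev = {0, -1, m},
           Acc = (\<lambda>j. if j = i then {(0, m), (m, m), (-1, -1)} else {(0, -1), (m, -1), (-1, -1)}),
           Pre = (\<lambda>_. Top)(m := \<xi>) \<rparr>"
| c2: "U_phi \<psi> D U \<Longrightarrow> m \<ge> 1 \<Longrightarrow> m \<notin> D \<Longrightarrow> dbi_normal (B i \<psi>) \<Longrightarrow>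
       U_phi (B i \<psi>) (D \<union> {m})
         \<lparr> Ev = {0, -1} \<union> D \<union> {m},
           Acc = (\<lambda>j. if j = i then underQ (Acc U j) \<union> {(0, m), (m, m)}
                      else underQ (Acc U j) \<union> {(0, -1)} \<union> {(m, k) | k. (0, k) \<in> Acc U j}),
           Pre = (Pre U)(m := Top) \<rparr>"
| c3: "propositional \<xi> \<Longrightarrow> U_phi \<psi> D U \<Longrightarrow> m \<ge> 1 \<Longrightarrow> m \<notin> D \<Longrightarrow> dbi_normal (B i (Conj \<xi> \<psi>)) \<Longrightarrow>
       U_phi (B i (Conj \<xi> \<psi>)) (D \<union> {m})
         \<lparr> Ev = {0, -1} \<union> D \<union> {m},
           Acc = (\<lambda>j. if j = i then underQ (Acc U j) \<union> {(0, m), (m, m)}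
                      else underQ (Acc U j) \<union> {(0, -1)} \<union> {(m, k) | k. (0, k) \<in> Acc U j}),
           Pre = (Pre U)(m := \<xi>) \<rparr>"
| c4: "U_phi \<psi> D1 U1 \<Longrightarrow> U_phi \<theta> D2 U2 \<Longrightarrow> D1 \<inter> D2 = {} \<Longrightarrow> dbi_normal (Conj \<psi> \<theta>) \<Longrightarrow>
       U_phi (Conj \<psi> \<theta>) (D1 \<union> D2)
         \<lparr> Ev = {0, -1} \<union> D1 \<union> D2,
           Acc = (\<lambda>j. underQ (Acc U1 j) \<union> underQ (Acc U2 j)
                    \<union> {(0, k) | k. (0, k) \<in> Acc U1 j \<union> Acc U2 j \<and> k \<in> D1 \<union> D2}
                    \<union> (if \<exists>k. (0, k) \<in> Acc U1 j \<union> Acc U2 j \<and> k \<in> D1 \<union> D2 then {} else {(0, -1)})),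
           Pre = (\<lambda>x. if x \<in> D1 then Pre U1 x else Pre U2 x) \<rparr>"

fun diachain :: "(nat \<times> 'p form) list \<Rightarrow> 'p form" where
  "diachain [] = Top"
| "diachain [(i, f)] = Dia i f"
| "diachain ((i, f) # rest) = Dia i (Conj f (diachain rest))"

fun boxes :: "nat list \<Rightarrow> 'p form \<Rightarrow> 'p form" where
  "boxes [] f = f"
| "boxes (i # ags) f = B i (boxes ags f)"

end

theory Submission
  imports Defs
begin

text \<open>In every action model \<open>U_phi \<phi> D U\<close> each event has at most one \<open>Q\<^sub>j\<close>-successor;
  in the conjunction case this holds because the two components share only the events \<open>0\<close>
  and \<open>-1\<close>, \<open>-1\<close> is absorbing, and \<open>0\<close> has a proper successor only for target agents,
  which are disjoint. Consequently, if \<open>\<gamma>\<close> is the \<open>Q\<^sub>i\<close>-successor of \<open>\<beta>\<close>, the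
  \<open>R\<^sub>i\<close>-successors of \<open>(x, \<beta>)\<close> in the product are exactly the pairs \<open>(u, \<gamma>)\<close> with
  \<open>x R\<^sub>i u\<close> and \<open>u \<Turnstile> pre(\<gamma>)\<close>. Following the unique event path
  \<open>0 Q\<^sub>i\<^sub>1 \<alpha>\<^sub>1 \<dots> Q\<^sub>i\<^sub>k \<alpha>\<^sub>k\<close>, a path refuting \<open>B\<^sub>i\<^sub>1 \<dots> B\<^sub>i\<^sub>k \<bottom>\<close> from
  \<open>(v, 0)\<close> is therefore the same thing as a path in \<open>M\<close> witnessing the chain of diamonds.\<close>

lemma sat_Bot [simp]: "\<not> sat M w Bot"
  by (simp add: Bot_def)

lemma sat_Top [simp]: "sat M w Top"
  by (simp add: Top_def)

lemma sat_Dia: "sat M w (Dia i f) \<longleftrightarrow> (\<exists>u. (w, u) \<in> Rel M i \<and> sat M u f)"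
  by (simp add: Dia_def)

lemma sat_diachain_Cons:
  "sat M w (diachain ((i, f) # rest)) \<longleftrightarrow>
    (\<exists>u. (w, u) \<in> Rel M i \<and> sat M u f \<and> sat M u (diachain rest))"
  by (cases rest) (auto simp: sat_Dia)

lemma dbi_normal_Conj_ta_disjoint: "dbi_normal (Conj \<psi> \<theta>) \<Longrightarrow> ta \<psi> \<inter> ta \<theta> = {}"
  by (cases rule: dbi_normal.cases) auto

lemma U_phi_Ev: "U_phi \<phi> D U \<Longrightarrow> Ev U = {0, -1} \<union> D"
  by (induction rule: U_phi.induct) auto

lemma U_phi_positive: "U_phi \<phi> D U \<Longrightarrow> m \<in> D \<Longrightarrow> m \<ge> 1"
  by (induction rule: U_phi.induct) auto

lemma U_phi_Pre_0: "U_phi \<phi> D U \<Longrightarrow> Pre U 0 = Top"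
  by (induction rule: U_phi.induct) (use U_phi_positive in fastforce)+

lemma U_phi_Acc_events:
  "U_phi \<phi> D U \<Longrightarrow> (a, b) \<in> Acc U j \<Longrightarrow> a \<in> {0, -1} \<union> D \<and> b \<in> {0, -1} \<union> D"
  by (induction arbitrary: a b rule: U_phi.induct) (auto simp: underQ_def split: if_splits)

lemma U_phi_Acc_minus_one: "U_phi \<phi> D U \<Longrightarrow> (-1, k) \<in> Acc U j \<Longrightarrow> k = -1"
  by (induction arbitrary: k rule: U_phi.induct) (auto simp: underQ_def split: if_splits)

lemma U_phi_Acc_zero_ta:
  "U_phi \<phi> D U \<Longrightarrow> (0, k) \<in> Acc U j \<Longrightarrow> k \<noteq> -1 \<Longrightarrow> j \<in> ta \<phi>"
  by (induction arbitrary: k rule: U_phi.induct) (auto simp: underQ_def split: if_splits)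

lemma U_phi_single_valued: "U_phi \<phi> D U \<Longrightarrow> single_valued (Acc U j)"
proof (induction rule: U_phi.induct)
  case (c1 \<xi> m i)
  then show ?case by (auto simp: single_valued_def)
next
  case (c2 \<psi> D U m i)
  have "m \<notin> {0, -1} \<union> D" using c2.hyps(2,3) by auto
  then have "(m, k) \<notin> Acc U j" for k using U_phi_Acc_events[OF c2.hyps(1)] by blast
  then show ?case using c2.IH by (auto simp: single_valued_def underQ_def)
next
  case (c3 \<xi> \<psi> D U m i)
  have "m \<notin> {0, -1} \<union> D" using c3.hyps(3,4) by auto
  then have "(m, k) \<notin> Acc U j" for k using U_phi_Acc_events[OF c3.hyps(2)] by blast
  then show ?case using c3.IH by (auto simp: single_valued_def underQ_def)
next
  case (c4 \<psi> D1 U1 \<theta> D2 U2)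
  have shared_source: "a = -1" if "(a, b) \<in> Acc U1 j" "(a, c) \<in> Acc U2 j" "a \<noteq> 0" for a b c
    using U_phi_Acc_events[OF c4.hyps(1) that(1)] U_phi_Acc_events[OF c4.hyps(2) that(2)]
      c4.hyps(3) that(3)
    by auto
  have no_shared_target: False
    if "(0, b) \<in> Acc U1 j" "(0, c) \<in> Acc U2 j" "b \<in> D1 \<union> D2" "c \<in> D1 \<union> D2" for b c
  proof -
    have "b \<noteq> -1" "c \<noteq> -1"
      using that(3,4) U_phi_positive[OF c4.hyps(1)] U_phi_positive[OF c4.hyps(2)] by force+
    then have "j \<in> ta \<psi>" "j \<in> ta \<theta>"
      using U_phi_Acc_zero_ta c4.hyps(1,2) that(1,2) by blast+
    then show False using dbi_normal_Conj_ta_disjoint[OF c4.hyps(4)] by blast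
  qed
  have nonzero_source: "b = c"
    if "(a, b) \<in> Acc U1 j \<union> Acc U2 j" "(a, c) \<in> Acc U1 j \<union> Acc U2 j" "a \<noteq> 0" for a b c
    using that c4.IH shared_source
      U_phi_Acc_minus_one[OF c4.hyps(1)] U_phi_Acc_minus_one[OF c4.hyps(2)]
    unfolding single_valued_def by blast
  have zero_source: "b = c"
    if "(0, b) \<in> Acc U1 j \<union> Acc U2 j" "(0, c) \<in> Acc U1 j \<union> Acc U2 j"
      "b \<in> D1 \<union> D2" "c \<in> D1 \<union> D2" for b c
    using that c4.IH no_shared_target unfolding single_valued_def by blast
  show ?case
    unfolding single_valued_def amodel.simps underQ_def
    using nonzero_source zero_source by (simp split: if_split_asm) blast
qed

lemma upd_states_subset_T_set: "upd_states M U w \<alpha> \<subseteq> T_set M U"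
  by (auto elim: upd_states.cases)

lemma upd_states_successor_iff:
  assumes "Rel M i \<subseteq> St M \<times> St M" and "\<gamma> \<in> Ev U"
    and "(x, \<beta>) \<in> upd_states M U w \<alpha>" and "(x, u) \<in> Rel M i" and "(\<beta>, \<gamma>) \<in> Acc U i"
  shows "(u, \<gamma>) \<in> upd_states M U w \<alpha> \<longleftrightarrow> sat M u (Pre U \<gamma>)"
proof
  assume "(u, \<gamma>) \<in> upd_states M U w \<alpha>"
  then show "sat M u (Pre U \<gamma>)" using upd_states_subset_T_set[of M U w \<alpha>] by (auto simp: T_set_def)
next
  assume "sat M u (Pre U \<gamma>)"
  moreover have "u \<in> St M" using assms(1,4) by blast
  ultimately have "(u, \<gamma>) \<in> T_set M U" using assms(2) by (simp add: T_set_def)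
  then show "(u, \<gamma>) \<in> upd_states M U w \<alpha>" by (rule upd_states.step[OF assms(3) _ assms(4,5)])
qed

lemma not_sat_B_update_iff:
  assumes "single_valued (Acc U i)"
    and "(x, \<beta>) \<in> upd_states M U w \<alpha>" and "(\<beta>, \<gamma>) \<in> Acc U i"
  shows "\<not> sat (update M U w \<alpha>) (x, \<beta>) (B i f) \<longleftrightarrow>
    (\<exists>u. (x, u) \<in> Rel M i \<and> (u, \<gamma>) \<in> upd_states M U w \<alpha> \<and> \<not> sat (update M U w \<alpha>) (u, \<gamma>) f)"
proof
  assume "\<not> sat (update M U w \<alpha>) (x, \<beta>) (B i f)"
  then obtain u \<delta> where "(x, u) \<in> Rel M i" "(\<beta>, \<delta>) \<in> Acc U i" "(u, \<delta>) \<in> upd_states M U w \<alpha>"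
      "\<not> sat (update M U w \<alpha>) (u, \<delta>) f"
    by (auto simp: update_def)
  moreover have "\<delta> = \<gamma>" using assms(1,3) \<open>(\<beta>, \<delta>) \<in> Acc U i\<close> by (auto dest: single_valuedD)
  ultimately show "\<exists>u. (x, u) \<in> Rel M i \<and> (u, \<gamma>) \<in> upd_states M U w \<alpha>
      \<and> \<not> sat (update M U w \<alpha>) (u, \<gamma>) f"
    by blast
next
  assume "\<exists>u. (x, u) \<in> Rel M i \<and> (u, \<gamma>) \<in> upd_states M U w \<alpha>
      \<and> \<not> sat (update M U w \<alpha>) (u, \<gamma>) f"
  then show "\<not> sat (update M U w \<alpha>) (x, \<beta>) (B i f)"
    using assms(2,3) by (auto simp: update_def)
qed

fun Acc_path :: "'p amodel \<Rightarrow> int \<Rightarrow> nat list \<Rightarrow> int list \<Rightarrow> bool" where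
  "Acc_path U \<beta> (i # ags) (\<gamma> # as) \<longleftrightarrow> (\<beta>, \<gamma>) \<in> Acc U i \<and> Acc_path U \<gamma> ags as"
| "Acc_path U \<beta> [] [] \<longleftrightarrow> True"
| "Acc_path U \<beta> _ _ \<longleftrightarrow> False"

lemma Acc_path_nthI:
  assumes "length as = length ags" and "ags \<noteq> []"
    and "(\<beta>, as ! 0) \<in> Acc U (ags ! 0)"
    and "\<forall>j. Suc j < length ags \<longrightarrow> (as ! j, as ! Suc j) \<in> Acc U (ags ! Suc j)"
  shows "Acc_path U \<beta> ags as"
  using assms
proof (induction ags arbitrary: as \<beta>)
  case (Cons i ags)
  then obtain \<gamma> as' where as: "as = \<gamma> # as'" by (cases as) auto
  show ?case
  proof (cases ags)
    case Nil
    then show ?thesis using Cons.prems as by simp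
  next
    case (Cons i' ags')
    have "Acc_path U \<gamma> ags as'"
      using Cons.prems as Cons by (intro Cons.IH) (auto dest: spec[of _ "Suc _"])
    then show ?thesis using Cons.prems(3) as by simp
  qed
qed simp

lemma sat_diachain_iff_not_sat_boxes_Bot:
  assumes "(x, \<beta>) \<in> upd_states M U w \<alpha>" and "Acc_path U \<beta> ags as"
    and "\<forall>i\<in>set ags. Rel M i \<subseteq> St M \<times> St M"
    and "\<forall>i\<in>set ags. Range (Acc U i) \<subseteq> Ev U"
    and "\<forall>i\<in>set ags. single_valued (Acc U i)"
  shows "sat M x (diachain (zip ags (map (Pre U) as))) \<longleftrightarrow>
    \<not> sat (update M U w \<alpha>) (x, \<beta>) (boxes ags Bot)"
  using assms
proof (induction ags arbitrary: as x \<beta>)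
  case Nil
  then show ?case by (cases as) auto
next
  case (Cons i ags)
  then obtain \<gamma> as' where as: "as = \<gamma> # as'" and \<beta>\<gamma>: "(\<beta>, \<gamma>) \<in> Acc U i"
    and path: "Acc_path U \<gamma> ags as'"
    by (cases as) auto
  have \<gamma>: "\<gamma> \<in> Ev U" using Cons.prems(4) \<beta>\<gamma> by auto
  have "sat M u (Pre U \<gamma>) \<and> sat M u (diachain (zip ags (map (Pre U) as'))) \<longleftrightarrow>
      (u, \<gamma>) \<in> upd_states M U w \<alpha> \<and> \<not> sat (update M U w \<alpha>) (u, \<gamma>) (boxes ags Bot)"
    if "(x, u) \<in> Rel M i" for u
    using upd_states_successor_iff[OF _ \<gamma> Cons.prems(1) that \<beta>\<gamma>] Cons.IH[OF _ path] Cons.prems(3-5)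
    by auto
  then show ?case
    using not_sat_B_update_iff[OF _ Cons.prems(1) \<beta>\<gamma>] Cons.prems(5)
    by (simp add: as sat_diachain_Cons) blast
qed

theorem theorem6:
  fixes n :: nat and \<phi> :: "'p form" and D :: "int set" and U :: "'p amodel"
    and ags :: "nat list" and as :: "int list"
    and M :: "('s, 'p) kripke" and v :: 's
  assumes "n > 1"
    and "agents \<phi> \<subseteq> {1..n}"
    and "dbi_normal \<phi>"
    and "U_phi \<phi> D U"
    and "length ags \<ge> 1" and "length as = length ags"
    and "set ags \<subseteq> {1..n}"
    and "\<forall>j. Suc j < length ags \<longrightarrow> ags ! j \<noteq> ags ! Suc j"
    and "(0, as ! 0) \<in> Acc U (ags ! 0)"
    and "\<forall>j. Suc j < length ags \<longrightarrow> (as ! j, as ! Suc j) \<in> Acc U (ags ! Suc j)"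
    and "wf_kripke n M" and "v \<in> St M"
  shows "sat M v (diachain (zip ags (map (Pre U) as)))
         \<longleftrightarrow> \<not> sat (update M U v 0) (v, 0) (boxes ags Bot)"
proof -
  have "(v, 0) \<in> T_set M U"
    using assms(4,12) by (simp add: T_set_def U_phi_Ev U_phi_Pre_0)
  then have "(v, 0) \<in> upd_states M U v 0" by (rule upd_states.base)
  moreover have "Acc_path U 0 ags as"
    using assms(5,6,9,10) by (intro Acc_path_nthI) auto
  moreover have "\<forall>i\<in>set ags. Rel M i \<subseteq> St M \<times> St M"
    using assms(7,11) by (auto simp: wf_kripke_def)
  moreover have "\<forall>i\<in>set ags. Range (Acc U i) \<subseteq> Ev U"
    using U_phi_Acc_events[OF assms(4)] U_phi_Ev[OF assms(4)] by blast
  moreover have "\<forall>i\<in>set ags. single_valued (Acc U i)"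
    using U_phi_single_valued[OF assms(4)] by blast
  ultimately show ?thesis by (rule sat_diachain_iff_not_sat_boxes_Bot)
qed

end
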